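(* Each of $\Upsilon=\pi,\theta,\theta_B,\theta_{AB},\Psi$ satisfies the separation property on the class of all tree-child phylogenetic networks (labeled in a fixed finite set $S$) in which no pair of parents of a hybrid node is connected by a path: for any two such networks $N_1,N_2$, if $\Upsilon(N_1)=\Upsilon(N_2)$ then $N_1\cong N_2$.
   Context: A DAG $N=(V,E)$ is labeled in $S$ if its leaves (out-degree 0) are bijectively labeled by $S$; $\cong$ means isomorphism of directed graphs preserving leaf labels. A tree node has in-degree at most 1; a hybrid node has in-degree greater than 1; a tree child is a child that is a tree node. A tree-child phylogenetic network is a rooted DAG labeled in $S$ in which every non-leaf node has at least one tree child, no tree node has out-degree 1, and every hybrid node has out-degree exactly 1. "No pair of parents of a hybrid node is connected by a path": if $u_1,u_2$ are parents of a hybrid node, there is no path $u_1\rightsquigarrow u_2$ nor $u_2\rightsquigarrow u_1$. For a node $v$: $C(v)$ is the set of descendant leaves; $A(v)$ the set of leaves $s$ such that every path from the root to $s$ contains $v$; $B(v)=C(v)\setminus A(v)$. For an arc $e=(u,v)$: $\pi(e)=(C(v),S\setminus C(v))$; $\theta(e)=(A(v),B(v),S\setminus C(v))$; $\theta_B(e)$ is $\theta(e)$ with each $s\in B(v)$ weighted by the maximum number of hybrid nodes on a path from $v$ to $s$ (including $v$ and $s$); $\theta_{AB}(e)$ is $\theta(e)$ with each $s\in A(v)\cup B(v)$ so weighted. An arc is a tree arc if its head is a tree node and a network arc otherwise; for a hybrid node $v$, $RS(v)=\{C(u)\mid u\text{ a parent of }v\}$; $\Psi(e)=\theta_{AB}(e)$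 for a tree arc, $\Psi(e)=(\theta(e),RS(v))$ for a network arc with head $v$. For each $\Upsilon$, $\Upsilon(N)=\{\Upsilon(e)\mid e\in E\}$. *)

theory Defs
  imports Main
begin

text \<open>A (candidate) network: a set of nodes, a set of arcs, and a labelling of nodes
(only the labels of leaves matter).\<close>
record ('v, 's) network =
  nodes :: "'v set"
  arcs  :: "('v \<times> 'v) set"
  lbl   :: "'v \<Rightarrow> 's"

definition parents :: "('v, 's) network \<Rightarrow> 'v \<Rightarrow> 'v set" where
  "parents N v = {u. (u, v) \<in> arcs N}"

definition children :: "('v, 's) network \<Rightarrow> 'v \<Rightarrow> 'v set" where
  "children N v = {w. (v, w) \<in> arcs N}"

definition indeg :: "('v, 's) network \<Rightarrow> 'v \<Rightarrow> nat" where
  "indeg N v = card (parents N v)"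

definition outdeg :: "('v, 's) network \<Rightarrow> 'v \<Rightarrow> nat" where
  "outdeg N v = card (children N v)"

definition leaves :: "('v, 's) network \<Rightarrow> 'v set" where
  "leaves N = {v \<in> nodes N. outdeg N v = 0}"

definition is_tree_node :: "('v, 's) network \<Rightarrow> 'v \<Rightarrow> bool" where
  "is_tree_node N v \<longleftrightarrow> v \<in> nodes N \<and> indeg N v \<le> 1"

definition is_hybrid :: "('v, 's) network \<Rightarrow> 'v \<Rightarrow> bool" where
  "is_hybrid N v \<longleftrightarrow> v \<in> nodes N \<and> indeg N v > 1"

definition is_dag :: "('v, 's) network \<Rightarrow> bool" where
  "is_dag N \<longleftrightarrow> finite (nodes N) \<and> arcs N \<subseteq> nodes N \<times> nodes N \<and> acyclic (arcs N)"

definition is_root :: "('v, 's) network \<Rightarrow> 'v \<Rightarrow> bool" where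
  "is_root N r \<longleftrightarrow> r \<in> nodes N \<and> indeg N r = 0"

definition rooted :: "('v, 's) network \<Rightarrow> bool" where
  "rooted N \<longleftrightarrow> (\<exists>!r. is_root N r)"

definition root :: "('v, 's) network \<Rightarrow> 'v" where
  "root N = (THE r. is_root N r)"

definition labeled_in :: "'s set \<Rightarrow> ('v, 's) network \<Rightarrow> bool" where
  "labeled_in S N \<longleftrightarrow> bij_betw (lbl N) (leaves N) S"

definition tree_child_network :: "'s set \<Rightarrow> ('v, 's) network \<Rightarrow> bool" where
  "tree_child_network S N \<longleftrightarrow>
     is_dag N \<and> rooted N \<and> labeled_in S N \<and>
     (\<forall>v \<in> nodes N. v \<notin> leaves N \<longrightarrow> (\<exists>c \<in> children N v. is_tree_node N c)) \<and>
     (\<forall>v. is_tree_node N v \<longrightarrow> outdeg N v \<noteq> 1) \<and>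
     (\<forall>v. is_hybrid N v \<longrightarrow> outdeg N v = 1)"

definition no_parent_paths :: "('v, 's) network \<Rightarrow> bool" where
  "no_parent_paths N \<longleftrightarrow>
     (\<forall>h u1 u2. is_hybrid N h \<and> u1 \<in> parents N h \<and> u2 \<in> parents N h \<and> u1 \<noteq> u2
        \<longrightarrow> (u1, u2) \<notin> (arcs N)\<^sup>+)"

definition net_iso :: "('v, 's) network \<Rightarrow> ('w, 's) network \<Rightarrow> bool" where
  "net_iso N1 N2 \<longleftrightarrow> (\<exists>f. bij_betw f (nodes N1) (nodes N2) \<and>
     (\<forall>u \<in> nodes N1. \<forall>w \<in> nodes N1. (u, w) \<in> arcs N1 \<longleftrightarrow> (f u, f w) \<in> arcs N2) \<and>
     (\<forall>x \<in> leaves N1. lbl N2 (f x) = lbl N1 x))"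

definition is_path :: "('v, 's) network \<Rightarrow> 'v list \<Rightarrow> bool" where
  "is_path N p \<longleftrightarrow> p \<noteq> [] \<and> set p \<subseteq> nodes N \<and>
     (\<forall>i. Suc i < length p \<longrightarrow> (p ! i, p ! Suc i) \<in> arcs N)"

definition path_from_to :: "('v, 's) network \<Rightarrow> 'v list \<Rightarrow> 'v \<Rightarrow> 'v \<Rightarrow> bool" where
  "path_from_to N p u w \<longleftrightarrow> is_path N p \<and> hd p = u \<and> last p = w"

definition Cl :: "('v, 's) network \<Rightarrow> 'v \<Rightarrow> 's set" where
  "Cl N v = lbl N ` {x \<in> leaves N. (v, x) \<in> (arcs N)\<^sup>*}"

definition Al :: "('v, 's) network \<Rightarrow> 'v \<Rightarrow> 's set" where
  "Al N v = lbl N ` {x \<in> leaves N. \<forall>p. path_from_to N p (root N) x \<longrightarrow> v \<in> set p}"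

definition Bl :: "('v, 's) network \<Rightarrow> 'v \<Rightarrow> 's set" where
  "Bl N v = Cl N v - Al N v"

definition hweight :: "('v, 's) network \<Rightarrow> 'v \<Rightarrow> 'v \<Rightarrow> nat" where
  "hweight N v x = Max {length (filter (is_hybrid N) p) | p. path_from_to N p v x}"

definition weighted :: "('v, 's) network \<Rightarrow> 'v \<Rightarrow> 's set \<Rightarrow> ('s \<times> nat) set" where
  "weighted N v T = {(lbl N x, hweight N v x) | x. x \<in> leaves N \<and> lbl N x \<in> T}"

definition pi_arc :: "'s set \<Rightarrow> ('v, 's) network \<Rightarrow> 'v \<times> 'v \<Rightarrow> 's set \<times> 's set" where
  "pi_arc S N e = (Cl N (snd e), S - Cl N (snd e))"

definition theta_arc :: "'s set \<Rightarrow> ('v, 's) network \<Rightarrow> 'v \<times> 'v \<Rightarrow> 's set \<times> 's set \<times> 's set" where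
  "theta_arc S N e = (Al N (snd e), Bl N (snd e), S - Cl N (snd e))"

definition thetaB_arc :: "'s set \<Rightarrow> ('v, 's) network \<Rightarrow> 'v \<times> 'v \<Rightarrow> 's set \<times> ('s \<times> nat) set \<times> 's set" where
  "thetaB_arc S N e = (Al N (snd e), weighted N (snd e) (Bl N (snd e)), S - Cl N (snd e))"

definition thetaAB_arc :: "'s set \<Rightarrow> ('v, 's) network \<Rightarrow> 'v \<times> 'v \<Rightarrow> ('s \<times> nat) set \<times> ('s \<times> nat) set \<times> 's set" where
  "thetaAB_arc S N e = (weighted N (snd e) (Al N (snd e)), weighted N (snd e) (Bl N (snd e)),
                        S - Cl N (snd e))"

definition RS :: "('v, 's) network \<Rightarrow> 'v \<Rightarrow> 's set set" where
  "RS N v = Cl N ` parents N v"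

definition Psi_arc :: "'s set \<Rightarrow> ('v, 's) network \<Rightarrow> 'v \<times> 'v \<Rightarrow>
    (('s \<times> nat) set \<times> ('s \<times> nat) set \<times> 's set) + (('s set \<times> 's set \<times> 's set) \<times> 's set set)" where
  "Psi_arc S N e = (if is_tree_node N (snd e) then Inl (thetaAB_arc S N e)
                    else Inr (theta_arc S N e, RS N (snd e)))"

definition arc_invariant :: "(('v \<times> 'v) \<Rightarrow> 'a) \<Rightarrow> ('v, 's) network \<Rightarrow> 'a set" where
  "arc_invariant f N = f ` arcs N"

end

theory Submission
  imports Defs
begin

text \<open>
  In a tree-child network without paths between the parents of a hybrid node, reachability
  can be read off the clusters: u reaches w iff C(w) is a proper subset of C(u), or C(w) = C(u)
  and u is w or a hybrid (whose unique child is then the tree node w). The absence of parent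
  paths is what forces the two children of a tree node to have incomparable clusters, and it
  makes the arcs exactly the covering pairs of reachability. So a node is determined by its key
  (C(v), v is hybrid), the arcs are the covering pairs of the induced order on keys, and the
  clusters of hybrid nodes are exactly those having two different minimal proper superclusters.
  Hence the set of clusters, which \<pi>(N) lists, determines N up to isomorphism. The other
  invariants determine \<pi>, since each of them records S - C(v).
\<close>

lemma net_iso_by_keys:
  fixes N1 :: "('v, 's) network" and N2 :: "('w, 's) network"
  assumes inj1: "inj_on K1 (nodes N1)" and inj2: "inj_on K2 (nodes N2)"
    and keys: "K1 ` nodes N1 = K2 ` nodes N2"
    and arcs1: "\<And>u w. u \<in> nodes N1 \<Longrightarrow> w \<in> nodes N1 \<Longrightarrow> (u, w) \<in> arcs N1 \<longleftrightarrow> A (K1 u) (K1 w)"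
    and arcs2: "\<And>u w. u \<in> nodes N2 \<Longrightarrow> w \<in> nodes N2 \<Longrightarrow> (u, w) \<in> arcs N2 \<longleftrightarrow> A (K2 u) (K2 w)"
    and leaves1: "\<And>x. x \<in> leaves N1 \<longleftrightarrow> x \<in> nodes N1 \<and> (\<forall>w\<in>nodes N1. (x, w) \<notin> arcs N1)"
    and leaves2: "\<And>x. x \<in> leaves N2 \<longleftrightarrow> x \<in> nodes N2 \<and> (\<forall>w\<in>nodes N2. (x, w) \<notin> arcs N2)"
    and lbl1: "\<And>x. x \<in> leaves N1 \<Longrightarrow> L (K1 x) = lbl N1 x"
    and lbl2: "\<And>x. x \<in> leaves N2 \<Longrightarrow> L (K2 x) = lbl N2 x"
  shows "net_iso N1 N2"
proof -
  define f where "f = inv_into (nodes N2) K2 \<circ> K1"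
  have bij: "bij_betw f (nodes N1) (nodes N2)"
    unfolding f_def using inj1 inj2 keys
    by (metis bij_betw_inv_into bij_betw_trans inj_on_imp_bij_betw)
  have key_f: "K2 (f v) = K1 v" if "v \<in> nodes N1" for v
    using that keys unfolding f_def by (metis comp_apply f_inv_into_f imageI)
  have f_nodes: "f v \<in> nodes N2" if "v \<in> nodes N1" for v
    using bij that by (meson bij_betwE)
  have arcs: "(u, w) \<in> arcs N1 \<longleftrightarrow> (f u, f w) \<in> arcs N2"
    if "u \<in> nodes N1" "w \<in> nodes N1" for u w
    using that arcs1 arcs2 key_f f_nodes by simp
  have "f x \<in> leaves N2" if "x \<in> leaves N1" for x
  proof -
    have "x \<in> nodes N1" using that leaves1 by blast
    moreover have "nodes N2 = f ` nodes N1" using bij by (simp add: bij_betw_def)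
    ultimately show ?thesis using that leaves1 leaves2 arcs f_nodes by auto
  qed
  then have "lbl N2 (f x) = lbl N1 x" if "x \<in> leaves N1" for x
    using that lbl1 lbl2 key_f leaves1 by metis
  then show ?thesis unfolding net_iso_def using bij arcs by blast
qed

locale tree_child_net =
  fixes S :: "'s set" and N :: "('v, 's) network"
  assumes tree_child: "tree_child_network S N"
begin

lemma finite_nodes: "finite (nodes N)"
  and arcs_subset: "arcs N \<subseteq> nodes N \<times> nodes N"
  and acyclic_arcs: "acyclic (arcs N)"
  using tree_child by (auto simp: tree_child_network_def is_dag_def)

lemma finite_arcs: "finite (arcs N)"
  using finite_nodes arcs_subset finite_subset by blast

lemma arc_nodes: "(u, v) \<in> arcs N \<Longrightarrow> u \<in> nodes N \<and> v \<in> nodes N"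
  using arcs_subset by auto

lemma trancl_nodes: "(u, v) \<in> (arcs N)\<^sup>+ \<Longrightarrow> u \<in> nodes N \<and> v \<in> nodes N"
  using trancl_subset_Sigma[OF arcs_subset] by auto

lemma trancl_neq: "(u, v) \<in> (arcs N)\<^sup>+ \<Longrightarrow> u \<noteq> v"
  using acyclic_arcs unfolding acyclic_def by auto

lemma finite_parents: "finite (parents N v)"
  using finite_nodes arcs_subset unfolding parents_def by (auto intro: finite_subset)

lemma finite_children: "finite (children N v)"
  using finite_nodes arcs_subset unfolding children_def by (auto intro: finite_subset)

lemma tree_node_parent_unique:
  assumes "is_tree_node N c" "(p, c) \<in> arcs N" "(q, c) \<in> arcs N" shows "p = q"
proof -
  have "card (parents N c) \<le> Suc 0" using assms(1) by (simp add: is_tree_node_def indeg_def)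
  then show ?thesis using card_le_Suc0_iff_eq[OF finite_parents] assms(2,3)
    by (auto simp: parents_def)
qed

lemma hybrid_iff_two_parents:
  "is_hybrid N h \<longleftrightarrow> (\<exists>p q. (p, h) \<in> arcs N \<and> (q, h) \<in> arcs N \<and> p \<noteq> q)"
  using card_le_Suc0_iff_eq[OF finite_parents, of h] arc_nodes
  by (auto simp: is_hybrid_def indeg_def parents_def not_less_eq_eq)

lemma tree_or_hybrid: "v \<in> nodes N \<Longrightarrow> is_tree_node N v \<or> is_hybrid N v"
  by (auto simp: is_tree_node_def is_hybrid_def)

lemma tree_node_not_hybrid: "is_tree_node N v \<Longrightarrow> \<not> is_hybrid N v"
  by (auto simp: is_tree_node_def is_hybrid_def)

lemma leaf_iff: "v \<in> leaves N \<longleftrightarrow> v \<in> nodes N \<and> (\<forall>w. (v, w) \<notin> arcs N)"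
  using finite_children by (auto simp: leaves_def outdeg_def children_def)

lemma hybrid_tree_child:
  assumes "is_hybrid N h" shows "\<exists>c. children N h = {c} \<and> is_tree_node N c"
proof -
  have out: "outdeg N h = 1" using tree_child assms by (auto simp: tree_child_network_def)
  then obtain c where c: "children N h = {c}" unfolding outdeg_def by (auto simp: card_Suc_eq)
  have "h \<notin> leaves N" using out by (auto simp: leaves_def)
  then have "\<exists>c' \<in> children N h. is_tree_node N c'"
    using tree_child assms by (auto simp: tree_child_network_def is_hybrid_def)
  then show ?thesis using c by auto
qed

lemma hybrid_child_tree_node:
  assumes "is_hybrid N h" "(h, c) \<in> arcs N" shows "is_tree_node N c"
proof -
  obtain d where "children N h = {d}" "is_tree_node N d" using hybrid_tree_child[OF assms(1)] by auto
  then show ?thesis using assms(2) by (auto simp: children_def)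
qed

lemma tree_node_two_children:
  assumes "is_tree_node N u" "(u, c) \<in> arcs N" shows "\<exists>c'. (u, c') \<in> arcs N \<and> c' \<noteq> c"
proof -
  have "outdeg N u \<noteq> 1" using tree_child assms by (auto simp: tree_child_network_def)
  moreover have "outdeg N u \<noteq> 0"
    using assms finite_children by (auto simp: outdeg_def children_def)
  ultimately have "children N u \<noteq> {c}" by (auto simp: outdeg_def)
  then show ?thesis using assms by (auto simp: children_def)
qed

lemma ancestor_of_tree_node:
  assumes "is_tree_node N c" "(p, c) \<in> arcs N" "(u, c) \<in> (arcs N)\<^sup>*"
  shows "u = c \<or> (u, p) \<in> (arcs N)\<^sup>*"
  using assms(3) tree_node_parent_unique[OF assms(1) _ assms(2)]
  by (auto elim: rtranclE)

lemma is_root_root: "is_root N (root N)"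
  using tree_child unfolding tree_child_network_def rooted_def root_def by (auto intro: theI')

lemma root_in_nodes: "root N \<in> nodes N"
  using is_root_root by (simp add: is_root_def)

lemma root_unique: "is_root N r \<Longrightarrow> r = root N"
  using tree_child is_root_root unfolding tree_child_network_def rooted_def by auto

lemma has_parent: "v \<in> nodes N \<Longrightarrow> v \<noteq> root N \<Longrightarrow> \<exists>p. (p, v) \<in> arcs N"
  using root_unique[of v] finite_parents[of v] by (auto simp: is_root_def indeg_def parents_def)

lemma root_reaches: "v \<in> nodes N \<Longrightarrow> (root N, v) \<in> (arcs N)\<^sup>*"
proof (induction v rule: wf_induct_rule[OF finite_acyclic_wf[OF finite_arcs acyclic_arcs]])
  case (1 v)
  show ?case
  proof (cases "v = root N")
    case False
    then obtain p where "(p, v) \<in> arcs N" using has_parent 1 by auto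
    then show ?thesis using 1 arc_nodes by (meson rtrancl_into_rtrancl)
  qed simp
qed

lemma nodes_eq_root_and_heads: "nodes N = insert (root N) (snd ` arcs N)"
  using root_in_nodes has_parent arc_nodes by force

lemma lbl_leaves: "lbl N ` leaves N = S" and inj_on_lbl: "inj_on (lbl N) (leaves N)"
  using tree_child by (auto simp: tree_child_network_def labeled_in_def bij_betw_def)

lemma Cl_antimono: "(u, v) \<in> (arcs N)\<^sup>* \<Longrightarrow> Cl N v \<subseteq> Cl N u"
  unfolding Cl_def by (auto intro: rtrancl_trans)

lemma Cl_subset: "Cl N v \<subseteq> S"
  using lbl_leaves unfolding Cl_def by auto

lemma leaf_in_Cl_iff: "x \<in> leaves N \<Longrightarrow> lbl N x \<in> Cl N u \<longleftrightarrow> (u, x) \<in> (arcs N)\<^sup>*"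
  unfolding Cl_def using inj_on_lbl by (auto dest: inj_onD)

lemma Cl_leaf: "x \<in> leaves N \<Longrightarrow> Cl N x = {lbl N x}"
  unfolding Cl_def by (auto simp: leaf_iff elim: converse_rtranclE)

lemma Cl_root: "Cl N (root N) = S"
  using root_reaches lbl_leaves unfolding Cl_def leaves_def by auto

lemma Cl_only_child:
  assumes "children N v = {c}" shows "Cl N v = Cl N c"
proof
  have "(v, c) \<in> arcs N" using assms by (auto simp: children_def)
  then show "Cl N c \<subseteq> Cl N v" using Cl_antimono by blast
  show "Cl N v \<subseteq> Cl N c"
  proof
    fix s assume "s \<in> Cl N v"
    then obtain y where y: "y \<in> leaves N" "(v, y) \<in> (arcs N)\<^sup>*" "s = lbl N y"
      unfolding Cl_def by auto
    have "(c, y) \<in> (arcs N)\<^sup>*"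
      using y(2,1) assms by (cases rule: converse_rtranclE) (auto simp: leaf_iff children_def)
    then show "s \<in> Cl N c" using y leaf_in_Cl_iff by auto
  qed
qed

text \<open>The leaf is reached from v through tree children only.\<close>
lemma leaf_with_comparable_ancestors:
  "v \<in> nodes N \<Longrightarrow> \<exists>x \<in> leaves N. (v, x) \<in> (arcs N)\<^sup>* \<and>
     (\<forall>u. (u, x) \<in> (arcs N)\<^sup>* \<longrightarrow> (u, v) \<in> (arcs N)\<^sup>* \<or> (v, u) \<in> (arcs N)\<^sup>*)"
proof (induction v rule: wf_induct_rule[OF finite_acyclic_wf_converse[OF finite_arcs acyclic_arcs]])
  case (1 v)
  show ?case
  proof (cases "v \<in> leaves N")
    case False
    then obtain c where c: "(v, c) \<in> arcs N" "is_tree_node N c"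
      using tree_child 1(2) by (auto simp: tree_child_network_def children_def)
    then obtain x where x: "x \<in> leaves N" "(c, x) \<in> (arcs N)\<^sup>*"
      "\<forall>u. (u, x) \<in> (arcs N)\<^sup>* \<longrightarrow> (u, c) \<in> (arcs N)\<^sup>* \<or> (c, u) \<in> (arcs N)\<^sup>*"
      using 1(1) arc_nodes by blast
    have "(u, v) \<in> (arcs N)\<^sup>* \<or> (v, u) \<in> (arcs N)\<^sup>*" if u: "(u, x) \<in> (arcs N)\<^sup>*" for u
    proof -
      have "(u, c) \<in> (arcs N)\<^sup>* \<or> (c, u) \<in> (arcs N)\<^sup>*" using x(3) u by blast
      then show ?thesis
      proof
        assume "(u, c) \<in> (arcs N)\<^sup>*"
        then show ?thesis using ancestor_of_tree_node[OF c(2,1)] c(1) by blast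
      next
        assume "(c, u) \<in> (arcs N)\<^sup>*"
        then show ?thesis using c(1) by (meson converse_rtrancl_into_rtrancl)
      qed
    qed
    then show ?thesis using x c(1) by (meson converse_rtrancl_into_rtrancl)
  qed auto
qed

lemma comparable_if_Cl_subset:
  assumes "a \<in> nodes N" "Cl N a \<subseteq> Cl N b"
  shows "(b, a) \<in> (arcs N)\<^sup>* \<or> (a, b) \<in> (arcs N)\<^sup>*"
proof -
  obtain x where x: "x \<in> leaves N" "(a, x) \<in> (arcs N)\<^sup>*"
      "\<forall>u. (u, x) \<in> (arcs N)\<^sup>* \<longrightarrow> (u, a) \<in> (arcs N)\<^sup>* \<or> (a, u) \<in> (arcs N)\<^sup>*"
    using leaf_with_comparable_ancestors[OF assms(1)] by auto
  then have "(b, x) \<in> (arcs N)\<^sup>*" using leaf_in_Cl_iff assms(2) by blast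
  then show ?thesis using x(3) by auto
qed

end

locale tree_child_npp = tree_child_net +
  assumes no_parent_paths: "no_parent_paths N"
begin

lemma parents_comparable_eq:
  assumes "(u1, h) \<in> arcs N" "(u2, h) \<in> arcs N" "(u1, u2) \<in> (arcs N)\<^sup>*" shows "u1 = u2"
proof (rule ccontr)
  assume ne: "u1 \<noteq> u2"
  then have "(u1, u2) \<in> (arcs N)\<^sup>+" using assms(3) by (simp add: rtrancl_eq_or_trancl)
  moreover have "is_hybrid N h" using assms(1,2) ne hybrid_iff_two_parents by blast
  ultimately show False using no_parent_paths assms(1,2) ne
    by (auto simp: no_parent_paths_def parents_def)
qed

text \<open>Two children of u with nested clusters would be comparable, so the lower one would have
  two parents, u and a descendant of u.\<close>
lemma tree_node_Cl_strict:
  assumes "is_tree_node N u" "(u, v) \<in> (arcs N)\<^sup>+" shows "Cl N v \<subset> Cl N u"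
proof -
  obtain c where c: "(u, c) \<in> arcs N" "(c, v) \<in> (arcs N)\<^sup>*" using tranclD assms(2) by metis
  obtain c' where c': "(u, c') \<in> arcs N" "c' \<noteq> c"
    using tree_node_two_children[OF assms(1) c(1)] by auto
  have below_u: "(u, d) \<in> (arcs N)\<^sup>+" if "(u, e) \<in> arcs N" "(e, d) \<in> (arcs N)\<^sup>*" for e d
    using that by (rule rtrancl_into_trancl2)
  have no_path: False
    if ua: "(u, a) \<in> arcs N" and ub: "(u, b) \<in> arcs N" and ab: "a \<noteq> b" "(a, b) \<in> (arcs N)\<^sup>*"
    for a b
  proof -
    have "(a, b) \<in> (arcs N)\<^sup>+" using ab by (simp add: rtrancl_eq_or_trancl)
    then obtain p where p: "(a, p) \<in> (arcs N)\<^sup>*" "(p, b) \<in> arcs N" by (blast dest: tranclD2)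
    have "(u, p) \<in> (arcs N)\<^sup>+" using below_u[OF ua p(1)] .
    moreover have "u = p" using parents_comparable_eq[OF ub p(2) trancl_into_rtrancl] calculation .
    ultimately show False using trancl_neq by blast
  qed
  have "(c, c') \<notin> (arcs N)\<^sup>*" "(c', c) \<notin> (arcs N)\<^sup>*"
    using no_path[OF c(1) c'(1)] no_path[OF c'(1) c(1)] c'(2) by auto
  moreover have "c' \<in> nodes N" using c'(1) arc_nodes by blast
  ultimately have "\<not> Cl N c' \<subseteq> Cl N c" using comparable_if_Cl_subset by blast
  moreover have "Cl N c' \<subseteq> Cl N u" using Cl_antimono[OF r_into_rtrancl[OF c'(1)]] .
  ultimately have "\<not> Cl N u \<subseteq> Cl N v" using Cl_antimono[OF c(2)] by blast
  then show ?thesis using Cl_antimono[OF trancl_into_rtrancl[OF assms(2)]] by auto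
qed

lemma equal_Cl_descendant:
  assumes "(u, v) \<in> (arcs N)\<^sup>+" "Cl N u \<subseteq> Cl N v" shows "is_hybrid N u \<and> (u, v) \<in> arcs N"
proof -
  have "\<not> is_tree_node N u" using tree_node_Cl_strict[OF _ assms(1)] assms(2) by auto
  then have hyb: "is_hybrid N u" using tree_or_hybrid trancl_nodes assms(1) by blast
  obtain c where c: "(u, c) \<in> arcs N" "(c, v) \<in> (arcs N)\<^sup>*" using assms(1) by (blast dest: tranclD)
  have "c = v"
  proof (rule ccontr)
    assume "c \<noteq> v"
    then have "(c, v) \<in> (arcs N)\<^sup>+" using c(2) by (simp add: rtrancl_eq_or_trancl)
    then have "Cl N v \<subset> Cl N c"
      using tree_node_Cl_strict hybrid_child_tree_node[OF hyb c(1)] by simp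
    then show False using Cl_antimono[OF r_into_rtrancl[OF c(1)]] assms(2) by blast
  qed
  then show ?thesis using hyb c by simp
qed

lemma reaches_iff_Cl:
  assumes "u \<in> nodes N" "w \<in> nodes N"
  shows "(u, w) \<in> (arcs N)\<^sup>* \<longleftrightarrow>
     Cl N w \<subset> Cl N u \<or> (Cl N w = Cl N u \<and> (u = w \<or> is_hybrid N u))"
proof
  assume uw: "(u, w) \<in> (arcs N)\<^sup>*"
  show "Cl N w \<subset> Cl N u \<or> (Cl N w = Cl N u \<and> (u = w \<or> is_hybrid N u))"
  proof (cases "u = w")
    case False
    then have "(u, w) \<in> (arcs N)\<^sup>+" using uw by (simp add: rtrancl_eq_or_trancl)
    then show ?thesis using Cl_antimono[OF uw] equal_Cl_descendant by blast
  qed simp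
next
  assume Cl: "Cl N w \<subset> Cl N u \<or> (Cl N w = Cl N u \<and> (u = w \<or> is_hybrid N u))"
  show "(u, w) \<in> (arcs N)\<^sup>*"
  proof (rule ccontr)
    assume not_uw: "(u, w) \<notin> (arcs N)\<^sup>*"
    then have "(w, u) \<in> (arcs N)\<^sup>*" "u \<noteq> w"
      using comparable_if_Cl_subset[OF assms(2)] Cl by blast+
    then have wu: "(w, u) \<in> (arcs N)\<^sup>+" by (simp add: rtrancl_eq_or_trancl)
    have "Cl N u \<subseteq> Cl N w" using Cl_antimono[OF trancl_into_rtrancl[OF wu]] .
    then have "Cl N w = Cl N u" "is_hybrid N u" using Cl \<open>u \<noteq> w\<close> by blast+
    then show False
      using equal_Cl_descendant[OF wu] hybrid_child_tree_node tree_node_not_hybrid by blast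
  qed
qed

lemma arc_iff_cover:
  "(u, w) \<in> arcs N \<longleftrightarrow> u \<in> nodes N \<and> w \<in> nodes N \<and> (u, w) \<in> (arcs N)\<^sup>+ \<and>
     \<not> (\<exists>z. (u, z) \<in> (arcs N)\<^sup>+ \<and> (z, w) \<in> (arcs N)\<^sup>+)"
proof
  assume uw: "(u, w) \<in> arcs N"
  have False if uz: "(u, z) \<in> (arcs N)\<^sup>+" and zw: "(z, w) \<in> (arcs N)\<^sup>+" for z
  proof -
    obtain p where p: "(z, p) \<in> (arcs N)\<^sup>*" "(p, w) \<in> arcs N" using zw by (blast dest: tranclD2)
    have "(u, p) \<in> (arcs N)\<^sup>+" using uz p(1) by (rule trancl_rtrancl_trancl)
    moreover have "u = p" using parents_comparable_eq[OF uw p(2) trancl_into_rtrancl] calculation .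
    ultimately show False using trancl_neq by blast
  qed
  then show "u \<in> nodes N \<and> w \<in> nodes N \<and> (u, w) \<in> (arcs N)\<^sup>+ \<and>
     \<not> (\<exists>z. (u, z) \<in> (arcs N)\<^sup>+ \<and> (z, w) \<in> (arcs N)\<^sup>+)" using uw arc_nodes by blast
next
  assume cover: "u \<in> nodes N \<and> w \<in> nodes N \<and> (u, w) \<in> (arcs N)\<^sup>+ \<and>
     \<not> (\<exists>z. (u, z) \<in> (arcs N)\<^sup>+ \<and> (z, w) \<in> (arcs N)\<^sup>+)"
  then obtain p where p: "(u, p) \<in> (arcs N)\<^sup>*" "(p, w) \<in> arcs N" by (blast dest: tranclD2)
  then have "u = p" using cover by (auto simp: rtrancl_eq_or_trancl)
  then show "(u, w) \<in> arcs N" using p(2) by simp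
qed

end

definition key :: "('v, 's) network \<Rightarrow> 'v \<Rightarrow> 's set \<times> bool" where
  "key N v = (Cl N v, is_hybrid N v)"

text \<open>A hybrid node and its tree child have the same cluster; the hybrid one lies above.\<close>
fun key_reaches :: "'s set \<times> bool \<Rightarrow> 's set \<times> bool \<Rightarrow> bool" where
  "key_reaches (X, a) (Y, b) \<longleftrightarrow> Y \<subset> X \<or> (Y = X \<and> (a \<or> \<not> b))"

definition key_arc :: "('s set \<times> bool) set \<Rightarrow> 's set \<times> bool \<Rightarrow> 's set \<times> bool \<Rightarrow> bool" where
  "key_arc K k l \<longleftrightarrow> key_reaches k l \<and> k \<noteq> l \<and>
     \<not> (\<exists>m\<in>K. key_reaches k m \<and> k \<noteq> m \<and> key_reaches m l \<and> m \<noteq> l)"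

definition minimal_supersets :: "'a set set \<Rightarrow> 'a set \<Rightarrow> 'a set set" where
  "minimal_supersets F X = {Y \<in> F. X \<subset> Y \<and> (\<forall>Z\<in>F. X \<subset> Z \<longrightarrow> Z \<subseteq> Y \<longrightarrow> Z = Y)}"

definition hybrid_cluster :: "'a set set \<Rightarrow> 'a set \<Rightarrow> bool" where
  "hybrid_cluster F X \<longleftrightarrow> (\<exists>Y1 \<in> minimal_supersets F X. \<exists>Y2 \<in> minimal_supersets F X. Y1 \<noteq> Y2)"

definition keys_of_clusters :: "'a set set \<Rightarrow> ('a set \<times> bool) set" where
  "keys_of_clusters F = (\<lambda>X. (X, False)) ` F \<union> (\<lambda>X. (X, True)) ` {X \<in> F. hybrid_cluster F X}"

context tree_child_npp
begin

lemma inj_on_key: "inj_on (key N) (nodes N)"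
proof (rule inj_onI)
  fix u w assume uw: "u \<in> nodes N" "w \<in> nodes N" "key N u = key N w"
  then have Cl: "Cl N u = Cl N w" and hyb: "is_hybrid N u = is_hybrid N w" by (auto simp: key_def)
  have False if ab: "(a, b) \<in> (arcs N)\<^sup>+" and "Cl N a = Cl N b" "is_hybrid N a = is_hybrid N b"
    for a b
    using equal_Cl_descendant[OF ab] that(2,3) hybrid_child_tree_node tree_node_not_hybrid by auto
  moreover have "(u, w) \<in> (arcs N)\<^sup>* \<or> (w, u) \<in> (arcs N)\<^sup>*"
    using comparable_if_Cl_subset[OF uw(1)] Cl by blast
  ultimately show "u = w" using Cl hyb by (auto simp: rtrancl_eq_or_trancl)
qed

lemma reaches_iff_key_reaches:
  assumes "u \<in> nodes N" "w \<in> nodes N"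
  shows "(u, w) \<in> (arcs N)\<^sup>* \<longleftrightarrow> key_reaches (key N u) (key N w)"
proof -
  have "Cl N w = Cl N u \<Longrightarrow> u \<noteq> w \<Longrightarrow> is_hybrid N u \<noteq> is_hybrid N w"
    using inj_on_key assms by (auto simp: key_def inj_on_def)
  then show ?thesis using reaches_iff_Cl[OF assms] by (auto simp: key_def)
qed

lemma trancl_iff_key_reaches:
  assumes "u \<in> nodes N" "w \<in> nodes N"
  shows "(u, w) \<in> (arcs N)\<^sup>+ \<longleftrightarrow> key_reaches (key N u) (key N w) \<and> key N u \<noteq> key N w"
proof -
  have "(u, w) \<in> (arcs N)\<^sup>+ \<longleftrightarrow> (u, w) \<in> (arcs N)\<^sup>* \<and> u \<noteq> w"
    using trancl_neq by (auto simp: rtrancl_eq_or_trancl)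
  then show ?thesis
    using reaches_iff_key_reaches[OF assms] inj_on_key assms by (auto simp: inj_on_def)
qed

lemma arc_iff_key_arc:
  assumes "u \<in> nodes N" "w \<in> nodes N"
  shows "(u, w) \<in> arcs N \<longleftrightarrow> key_arc (key N ` nodes N) (key N u) (key N w)"
proof -
  have "(\<exists>z. (u, z) \<in> (arcs N)\<^sup>+ \<and> (z, w) \<in> (arcs N)\<^sup>+) \<longleftrightarrow>
        (\<exists>z\<in>nodes N. key_reaches (key N u) (key N z) \<and> key N u \<noteq> key N z \<and>
           key_reaches (key N z) (key N w) \<and> key N z \<noteq> key N w)"
    using trancl_iff_key_reaches assms trancl_nodes by meson
  then show ?thesis
    using arc_iff_cover[of u w] trancl_iff_key_reaches[OF assms] assms by (auto simp: key_arc_def)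
qed

lemma hybrid_parent_Cl_strict:
  assumes p: "(p, h) \<in> arcs N" and h: "is_hybrid N h" shows "Cl N h \<subset> Cl N p"
proof -
  have "\<not> Cl N p \<subseteq> Cl N h"
    using equal_Cl_descendant[OF r_into_trancl[OF p]] hybrid_child_tree_node tree_node_not_hybrid h
    by blast
  then show ?thesis using Cl_antimono[OF r_into_rtrancl[OF p]] by auto
qed

text \<open>A cluster lying strictly between C(h) and C(p) belongs to a node z above h; the last arc of
  a path from z to h enters h from a parent comparable with p, hence from p itself.\<close>
lemma hybrid_parent_Cl_minimal:
  assumes h: "is_hybrid N h" and p: "(p, h) \<in> arcs N"
  shows "Cl N p \<in> minimal_supersets (Cl N ` nodes N) (Cl N h)"
proof -
  have h_node: "h \<in> nodes N" and p_node: "p \<in> nodes N" using p arc_nodes by auto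
  have "Cl N z = Cl N p" if z: "z \<in> nodes N" "Cl N h \<subset> Cl N z" "Cl N z \<subseteq> Cl N p" for z
  proof -
    have "(z, h) \<in> (arcs N)\<^sup>*" "z \<noteq> h" using reaches_iff_Cl[OF z(1) h_node] z(2) by auto
    then have "(z, h) \<in> (arcs N)\<^sup>+" by (simp add: rtrancl_eq_or_trancl)
    then obtain q where q: "(z, q) \<in> (arcs N)\<^sup>*" "(q, h) \<in> arcs N" by (blast dest: tranclD2)
    have "Cl N q \<subseteq> Cl N p" using Cl_antimono[OF q(1)] z(3) by blast
    then have "(p, q) \<in> (arcs N)\<^sup>* \<or> (q, p) \<in> (arcs N)\<^sup>*"
      using comparable_if_Cl_subset arc_nodes q(2) by blast
    then have "q = p" using parents_comparable_eq p q(2) by blast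
    then show ?thesis using Cl_antimono[OF q(1)] z(3) by auto
  qed
  then show ?thesis
    using hybrid_parent_Cl_strict[OF p h] p_node unfolding minimal_supersets_def by auto
qed

lemma hybrid_cluster_if_hybrid:
  assumes h: "is_hybrid N h" shows "hybrid_cluster (Cl N ` nodes N) (Cl N h)"
proof -
  obtain p1 p2 where p: "(p1, h) \<in> arcs N" "(p2, h) \<in> arcs N" "p1 \<noteq> p2"
    using h hybrid_iff_two_parents by blast
  have "p1 \<in> nodes N" using p(1) arc_nodes by blast
  then have "Cl N p1 \<noteq> Cl N p2"
    using comparable_if_Cl_subset[of p1 p2] parents_comparable_eq[OF p(1,2)]
      parents_comparable_eq[OF p(2,1)] p(3) by auto
  then show ?thesis
    using hybrid_parent_Cl_minimal[OF h] p unfolding hybrid_cluster_def by blast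
qed

text \<open>Every proper supercluster of C(v) belongs to an ancestor of v, whose path to the tree node v
  passes through its unique parent p.\<close>
lemma minimal_superset_unique_parent:
  assumes v: "v \<in> nodes N" and not_hyb: "\<forall>h\<in>nodes N. is_hybrid N h \<longrightarrow> Cl N h \<noteq> Cl N v"
    and p: "(p, v) \<in> arcs N" and Y: "Y \<in> minimal_supersets (Cl N ` nodes N) (Cl N v)"
  shows "Y = Cl N p"
proof -
  have vt: "is_tree_node N v" using v not_hyb tree_or_hybrid by blast
  have p_node: "p \<in> nodes N" using p arc_nodes by blast
  obtain y where y: "y \<in> nodes N" "Y = Cl N y" "Cl N v \<subset> Cl N y"
    using Y unfolding minimal_supersets_def by auto
  then have "(y, v) \<in> (arcs N)\<^sup>*" "y \<noteq> v" using reaches_iff_Cl[OF y(1) v] by auto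
  then have "(y, v) \<in> (arcs N)\<^sup>+" by (simp add: rtrancl_eq_or_trancl)
  then obtain q where q: "(y, q) \<in> (arcs N)\<^sup>*" "(q, v) \<in> arcs N" by (blast dest: tranclD2)
  have "q = p" using tree_node_parent_unique[OF vt q(2) p] .
  have "Cl N v \<subseteq> Cl N p" using Cl_antimono[OF r_into_rtrancl[OF p]] .
  moreover have "\<not> Cl N p \<subseteq> Cl N v"
    using equal_Cl_descendant[OF r_into_trancl[OF p]] not_hyb p_node calculation by blast
  ultimately have "Cl N v \<subset> Cl N p" by auto
  moreover have "Cl N p \<subseteq> Y" using Cl_antimono q(1) \<open>q = p\<close> y(2) by simp
  ultimately show ?thesis using Y p_node unfolding minimal_supersets_def by blast
qed

lemma hybrid_cluster_iff:
  assumes v: "v \<in> nodes N"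
  shows "hybrid_cluster (Cl N ` nodes N) (Cl N v) \<longleftrightarrow> (\<exists>h\<in>nodes N. is_hybrid N h \<and> Cl N h = Cl N v)"
proof
  assume hc: "hybrid_cluster (Cl N ` nodes N) (Cl N v)"
  show "\<exists>h\<in>nodes N. is_hybrid N h \<and> Cl N h = Cl N v"
  proof (rule ccontr)
    assume not_hyb: "\<not> ?thesis"
    obtain Y1 Y2 where Y: "Y1 \<in> minimal_supersets (Cl N ` nodes N) (Cl N v)"
      "Y2 \<in> minimal_supersets (Cl N ` nodes N) (Cl N v)" "Y1 \<noteq> Y2"
      using hc unfolding hybrid_cluster_def by auto
    have "v \<noteq> root N"
      using Y(1) Cl_subset Cl_root unfolding minimal_supersets_def by blast
    then obtain p where "(p, v) \<in> arcs N" using has_parent v by blast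
    then show False using minimal_superset_unique_parent[OF v] not_hyb Y by blast
  qed
next
  assume "\<exists>h\<in>nodes N. is_hybrid N h \<and> Cl N h = Cl N v"
  then show "hybrid_cluster (Cl N ` nodes N) (Cl N v)" using hybrid_cluster_if_hybrid by metis
qed

lemma tree_node_with_Cl:
  assumes v: "v \<in> nodes N" shows "\<exists>t\<in>nodes N. \<not> is_hybrid N t \<and> Cl N t = Cl N v"
proof (cases "is_hybrid N v")
  case True
  then obtain c where c: "children N v = {c}" "is_tree_node N c" using hybrid_tree_child by blast
  then have "c \<in> nodes N" using arc_nodes by (auto simp: children_def)
  then show ?thesis using c Cl_only_child tree_node_not_hybrid by metis
qed (use v in auto)

lemma keys_eq_keys_of_clusters: "key N ` nodes N = keys_of_clusters (Cl N ` nodes N)"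
proof
  show "key N ` nodes N \<subseteq> keys_of_clusters (Cl N ` nodes N)"
  proof
    fix k assume "k \<in> key N ` nodes N"
    then obtain v where v: "v \<in> nodes N" "k = (Cl N v, is_hybrid N v)" by (auto simp: key_def)
    show "k \<in> keys_of_clusters (Cl N ` nodes N)"
    proof (cases "is_hybrid N v")
      case True
      then have "hybrid_cluster (Cl N ` nodes N) (Cl N v)" by (rule hybrid_cluster_if_hybrid)
      then show ?thesis using v True by (auto simp: keys_of_clusters_def)
    qed (use v in \<open>auto simp: keys_of_clusters_def\<close>)
  qed
  show "keys_of_clusters (Cl N ` nodes N) \<subseteq> key N ` nodes N"
  proof
    fix k assume "k \<in> keys_of_clusters (Cl N ` nodes N)"
    then consider v where "v \<in> nodes N" "k = (Cl N v, False)"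
      | v where "v \<in> nodes N" "k = (Cl N v, True)" "hybrid_cluster (Cl N ` nodes N) (Cl N v)"
      unfolding keys_of_clusters_def by auto
    then show "k \<in> key N ` nodes N"
    proof cases
      case (1 v)
      then obtain t where "t \<in> nodes N" "\<not> is_hybrid N t" "Cl N t = Cl N v"
        using tree_node_with_Cl by blast
      then show ?thesis using 1 by (auto simp: key_def)
    next
      case (2 v)
      then obtain h where "h \<in> nodes N" "is_hybrid N h" "Cl N h = Cl N v"
        using hybrid_cluster_iff by blast
      then show ?thesis using 2 by (auto simp: key_def)
    qed
  qed
qed

lemma clusters_from_pi: "Cl N ` nodes N = insert S (fst ` arc_invariant (pi_arc S N) N)"
proof -
  have "fst ` arc_invariant (pi_arc S N) N = Cl N ` snd ` arcs N"
    by (auto simp: arc_invariant_def pi_arc_def image_image)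
  then show ?thesis using nodes_eq_root_and_heads Cl_root by (metis image_insert)
qed

lemma leaf_iff_no_arc: "x \<in> leaves N \<longleftrightarrow> x \<in> nodes N \<and> (\<forall>w\<in>nodes N. (x, w) \<notin> arcs N)"
  using leaf_iff arc_nodes by blast

lemma label_from_key: "x \<in> leaves N \<Longrightarrow> the_elem (fst (key N x)) = lbl N x"
  by (simp add: key_def Cl_leaf)

end

theorem pi_separates:
  fixes N1 :: "('v, 's) network" and N2 :: "('w, 's) network"
  assumes "tree_child_npp S N1" "tree_child_npp S N2"
    and pi_eq: "arc_invariant (pi_arc S N1) N1 = arc_invariant (pi_arc S N2) N2"
  shows "net_iso N1 N2"
proof -
  interpret N1: tree_child_npp S N1 by fact
  interpret N2: tree_child_npp S N2 by fact
  have keys: "key N1 ` nodes N1 = key N2 ` nodes N2"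
    using N1.keys_eq_keys_of_clusters N2.keys_eq_keys_of_clusters
      N1.clusters_from_pi N2.clusters_from_pi pi_eq by simp
  have arcs2: "(u, w) \<in> arcs N2 \<longleftrightarrow> key_arc (key N1 ` nodes N1) (key N2 u) (key N2 w)"
    if "u \<in> nodes N2" "w \<in> nodes N2" for u w
    using N2.arc_iff_key_arc[OF that] keys by simp
  show ?thesis
    by (rule net_iso_by_keys[where L = "\<lambda>k. the_elem (fst k)", OF N1.inj_on_key N2.inj_on_key keys
          N1.arc_iff_key_arc arcs2 N1.leaf_iff_no_arc N2.leaf_iff_no_arc
          N1.label_from_key N2.label_from_key])
qed

lemma arc_invariant_comp: "arc_invariant (g \<circ> F) N = g ` arc_invariant F N"
  by (simp add: arc_invariant_def image_comp)

theorem separates_if_determines_pi: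
  fixes N1 :: "('v, 's) network" and N2 :: "('w, 's) network"
  assumes "tree_child_npp S N1" "tree_child_npp S N2"
    and "pi_arc S N1 = g \<circ> F1" "pi_arc S N2 = g \<circ> F2"
    and "arc_invariant F1 N1 = arc_invariant F2 N2"
  shows "net_iso N1 N2"
  using pi_separates[OF assms(1,2)] assms(3-5) arc_invariant_comp by metis

definition pi_of_triple :: "'s set \<Rightarrow> 'a \<times> 'b \<times> 's set \<Rightarrow> 's set \<times> 's set" where
  "pi_of_triple S t = (S - snd (snd t), snd (snd t))"

lemma (in tree_child_net) pi_arc_determined:
  "pi_arc S N = pi_of_triple S \<circ> theta_arc S N"
  "pi_arc S N = pi_of_triple S \<circ> thetaB_arc S N"
  "pi_arc S N = pi_of_triple S \<circ> thetaAB_arc S N"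
  "pi_arc S N = case_sum (pi_of_triple S) (pi_of_triple S \<circ> fst) \<circ> Psi_arc S N"
  using Cl_subset
  by (auto simp: fun_eq_iff pi_arc_def theta_arc_def thetaB_arc_def thetaAB_arc_def Psi_arc_def
      pi_of_triple_def double_diff)

theorem corollary9:
  fixes S :: "'s set" and N1 :: "('v, 's) network" and N2 :: "('w, 's) network"
  assumes "finite S"
    and "tree_child_network S N1" and "no_parent_paths N1"
    and "tree_child_network S N2" and "no_parent_paths N2"
  shows "(arc_invariant (pi_arc S N1) N1 = arc_invariant (pi_arc S N2) N2 \<longrightarrow> net_iso N1 N2)
       \<and> (arc_invariant (theta_arc S N1) N1 = arc_invariant (theta_arc S N2) N2 \<longrightarrow> net_iso N1 N2)
       \<and> (arc_invariant (thetaB_arc S N1) N1 = arc_invariant (thetaB_arc S N2) N2 \<longrightarrow> net_iso N1 N2)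
       \<and> (arc_invariant (thetaAB_arc S N1) N1 = arc_invariant (thetaAB_arc S N2) N2 \<longrightarrow> net_iso N1 N2)
       \<and> (arc_invariant (Psi_arc S N1) N1 = arc_invariant (Psi_arc S N2) N2 \<longrightarrow> net_iso N1 N2)"
proof -
  have N1: "tree_child_npp S N1" and N2: "tree_child_npp S N2"
    using assms by (simp_all add: tree_child_npp_def tree_child_npp_axioms_def tree_child_net_def)
  interpret N1: tree_child_npp S N1 by fact
  interpret N2: tree_child_npp S N2 by fact
  note separates = separates_if_determines_pi[OF N1 N2]
  show ?thesis
    using pi_separates[OF N1 N2]
      separates[OF N1.pi_arc_determined(1) N2.pi_arc_determined(1)]
      separates[OF N1.pi_arc_determined(2) N2.pi_arc_determined(2)]
      separates[OF N1.pi_arc_determined(3) N2.pi_arc_determined(3)]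
      separates[OF N1.pi_arc_determined(4) N2.pi_arc_determined(4)]
    by blast
qed

end
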